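(* Let $\mathbb{E}$ be a finite-dimensional real vector space with inner product $\langle\cdot,\cdot\rangle$ and Euclidean norm $\|\cdot\|$. Let $\bar{\mathsf{K}}\subset\mathbb{E}$ be a closed convex set with nonempty (relative) interior $\mathsf{K}$, let $\mathbf{A}:\mathbb{E}\to\mathbb{R}^m$ be linear with $\mathrm{image}(\mathbf{A})=\mathbb{R}^m$, $b\in\mathbb{R}^m$, $\mathsf{L}=\{x\in\mathbb{E}:\mathbf{A}x=b\}$, and assume $\mathsf{X}=\mathsf{K}\cap\mathsf{L}\neq\emptyset$. Let $f:\mathbb{E}\to\mathbb{R}$ be (possibly non-convex) continuous on $\bar{\mathsf{X}}=\bar{\mathsf{K}}\cap\mathsf{L}$ and continuously differentiable on $\mathsf{X}$, and assume the problem $\min\{f(x): \mathbf{A}x=b,\ x\in\bar{\mathsf{K}}\}$ admits a global solution. Let $h$ be a $\nu$-self-concordant barrier for $\bar{\mathsf{K}}$ with Hessian $H(x)=\nabla^2 h(x)$. Let $x^*\in\bar{\mathsf{K}}$ be a local solution of this problem. Then there exist sequences $x^k\in\mathbb{E}$, $y^k\in\mathbb{R}^m$, $s^k\in\mathbb{E}^*$ and $\sigma_k>0$ with $\sigma_k\to0$ such that: (1) $x^k\in\mathsf{K}$, $\mathbf{A}x^k=b$ for all $k$, and $x^k\to x^*$; (2) $\nabla f(x^k)-\mathbf{A}^*y^k-s^k\to 0$; (3) $-s^k\in \mathrm{N}^{\sigma_k}_{\bar{\mathsf{K}}}(x^k)$ for all $k$. If, in addition, $f$ is twice differentiable on $\mathsf{K}$,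 then there exist $\theta_k,\delta_k\in(0,\infty)$ with $\theta_k\to0$, $\delta_k\to0$ such that $\langle(\nabla^2 f(x^k)+\theta_k H(x^k)+\delta_k\mathbf{I})d,d\rangle\ge 0$ for all $d\in\mathbb{E}$ with $\mathbf{A}d=0$, where $\mathbf{I}$ is the identity operator.
   Context: $\mathbb{E}^*$ is the dual space; $\mathbf{A}^*$ denotes the adjoint of $\mathbf{A}$. A function $h:\bar{\mathsf{K}}\to(-\infty,+\infty]$ with $\mathrm{dom}\,h=\mathsf{K}$ is a $\nu$-self-concordant barrier for $\bar{\mathsf{K}}$ (in the sense of Nesterov–Nemirovski; in particular $h$ is convex, three times continuously differentiable on $\mathsf{K}$, with positive definite Hessian $H(x)$) if for all $x\in\mathsf{K}$, $u\in\mathbb{E}$: $|D^3h(x)[u,u,u]|\le 2\,D^2h(x)[u,u]^{3/2}$ and $\sup_{u\in\mathbb{E}}|2Dh(x)[u]-D^2h(x)[u,u]|\le\nu$. For $\varepsilon\ge0$ and $x\in\bar{\mathsf{K}}$, the $\varepsilon$-approximate normal cone is $\mathrm{N}^{\varepsilon}_{\bar{\mathsf{K}}}(x)=\{s\in\mathbb{E}^*: \langle s,y-x\rangle\le\varepsilon\ \forall y\in\bar{\mathsf{K}}\}$. *)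

theory Defs
  imports "HOL-Analysis.Analysis"
begin

text \<open>The epsilon-approximate normal cone of a set C at x (dual space identified
  with the space itself via the inner product).\<close>
definition approx_normal_cone :: "real \<Rightarrow> ('a::real_inner) set \<Rightarrow> 'a \<Rightarrow> 'a set" where
  "approx_normal_cone eps C x = {s. \<forall>y\<in>C. s \<bullet> (y - x) \<le> eps}"

text \<open>h is a nu-self-concordant barrier (Nesterov--Nemirovski) for the closed convex
  set Kb, with domain K = interior Kb, gradient g and Hessian H (H x is a linear
  operator, so D^2 h(x)[u,v] = H x u \<bullet> v).\<close>
definition sc_barrier ::
  "('a::euclidean_space) set \<Rightarrow> real \<Rightarrow> ('a \<Rightarrow> real) \<Rightarrow> ('a \<Rightarrow> 'a) \<Rightarrow> ('a \<Rightarrow> 'a \<Rightarrow> 'a) \<Rightarrow> bool" where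
  "sc_barrier Kb nu h g H \<longleftrightarrow>
     convex_on (interior Kb) h \<and>
     (\<forall>x\<in>interior Kb. (h has_derivative (\<lambda>u. g x \<bullet> u)) (at x)) \<and>
     (\<forall>x\<in>interior Kb. (g has_derivative H x) (at x)) \<and>
     (\<exists>D3. (\<forall>x\<in>interior Kb. \<forall>u v.
                ((\<lambda>y. H y u \<bullet> v) has_derivative (\<lambda>w. D3 x u v w)) (at x)) \<and>
           (\<forall>u v w. continuous_on (interior Kb) (\<lambda>x. D3 x u v w)) \<and>
           (\<forall>x\<in>interior Kb. \<forall>u. \<bar>D3 x u u u\<bar> \<le> 2 * (H x u \<bullet> u) powr (3/2))) \<and>
     (\<forall>x\<in>interior Kb. \<forall>u. u \<noteq> 0 \<longrightarrow> H x u \<bullet> u > 0) \<and>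
     (\<forall>x\<in>interior Kb. \<forall>u. 2 * (g x \<bullet> u) - H x u \<bullet> u \<le> nu) \<and>
     (\<forall>z\<in>Kb - interior Kb. filterlim h at_top (at z within interior Kb))"

end

theory Submission
  imports Defs
begin

(*
  For small eps > 0 minimise the penalised objective f + mu h + eps |x - xstar|^2 over the
  feasible points of a closed ball around xstar.  Since the barrier h blows up at the boundary
  of Kb, a minimiser x exists and lies in the interior of Kb.  Comparing with an interior
  feasible point close to xstar, with mu small relative to eps, forces |x - xstar|^2 <= 3 eps,
  so x is an interior local minimiser on the affine set A x = b: the gradient
  gf x + mu gh x + 2 eps (x - xstar) lies in the range of the adjoint of A, and the Hessian of
  the penalised objective is positive semidefinite on the kernel of A.  Finally the barrier
  inequality gh x . (y - x) <= nu for y in Kb makes -mu gh x an approximate normal vector,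
  with sigma = mu (nu + 1), theta = mu and delta = 2 eps.
*)

lemma has_real_derivative_along_line:
  fixes F :: "'a::real_normed_vector \<Rightarrow> real"
  assumes "(F has_derivative F') (at (x + t *\<^sub>R d))"
  shows "((\<lambda>s. F (x + s *\<^sub>R d)) has_real_derivative F' d) (at t)"
proof -
  have "((\<lambda>s. x + s *\<^sub>R d) has_derivative (\<lambda>s. s *\<^sub>R d)) (at t)"
    by (auto intro!: derivative_eq_intros)
  from has_derivative_compose[OF this assms]
  have "((\<lambda>s. F (x + s *\<^sub>R d)) has_derivative (\<lambda>s. F' (s *\<^sub>R d))) (at t)" .
  moreover have "(\<lambda>s. F' (s *\<^sub>R d)) = (*) (F' d)"
    using linear_scale[OF has_derivative_linear[OF assms]] by (auto simp: fun_eq_iff)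
  ultimately show ?thesis by (simp add: has_field_derivative_def)
qed

lemma local_min_second_deriv_nonneg:
  fixes phi psi :: "real \<Rightarrow> real"
  assumes e: "e > 0"
    and min: "\<And>t. \<bar>t\<bar> < e \<Longrightarrow> phi 0 \<le> phi t"
    and phi_deriv: "\<And>t. \<bar>t\<bar> < e \<Longrightarrow> (phi has_real_derivative psi t) (at t)"
    and psi_deriv: "(psi has_real_derivative Q) (at 0)"
  shows "Q \<ge> 0"
proof (rule ccontr)
  assume "\<not> Q \<ge> 0"
  then obtain dd where dd: "dd > 0" "\<And>h. h > 0 \<Longrightarrow> h < dd \<Longrightarrow> psi 0 > psi (0 + h)"
    using DERIV_neg_dec_right[OF psi_deriv] by force
  have psi0: "psi 0 = 0"
    using DERIV_local_min[OF phi_deriv[of 0] e] min e by auto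
  define t where "t = min dd e / 2"
  have t: "t > 0" "t < dd" "t < e" using dd e by (auto simp: t_def)
  obtain z where z: "0 < z" "z < t" "phi t - phi 0 = (t - 0) * psi z"
    using MVT2[of 0 t phi psi] t phi_deriv by force
  have "psi z < 0" using dd(2)[of z] z t psi0 by auto
  then have "t * psi z < 0" using t by (simp add: mult_pos_neg)
  then have "phi t < phi 0" using z by simp
  then show False using min[of t] t by auto
qed

lemma riccati_inequality_initial_bound:
  fixes phi dphi :: "real \<Rightarrow> real"
  assumes nu: "nu \<ge> 0"
    and deriv: "\<And>t. 0 \<le> t \<Longrightarrow> t \<le> 1 \<Longrightarrow> (phi has_real_derivative dphi t) (at t)"
    and riccati: "\<And>t. 0 \<le> t \<Longrightarrow> t \<le> 1 \<Longrightarrow> (phi t)\<^sup>2 \<le> nu * dphi t"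
  shows "phi 0 \<le> nu"
proof (rule ccontr)
  assume "\<not> phi 0 \<le> nu"
  then have phi0: "phi 0 > nu" by simp
  have "nu \<noteq> 0"
    using riccati[of 0] phi0 nu by (auto simp: not_le)
  with nu have nu_pos: "nu > 0" by simp
  have dphi_nonneg: "dphi t \<ge> 0" if "0 \<le> t" "t \<le> 1" for t
  proof -
    have "0 \<le> nu * dphi t" using riccati[OF that] by (meson order_trans zero_le_power2)
    then show ?thesis using nu_pos by (simp add: zero_le_mult_iff)
  qed
  have phi_pos: "phi t > 0" if "0 \<le> t" "t \<le> 1" for t
  proof -
    have "phi 0 \<le> phi t"
      using that deriv dphi_nonneg by (intro DERIV_nonneg_imp_nondecreasing[OF that(1)]) force
    then show ?thesis using phi0 nu by simp
  qed
  \<comment> \<open>\<open>- 1 / phi\<close> grows at least with slope \<open>1 / nu\<close>, yet stays negative on \<open>[0, 1]\<close>.\<close>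
  define psi where "psi t = - inverse (phi t) - t / nu" for t
  have "psi 0 \<le> psi 1"
  proof (rule DERIV_nonneg_imp_nondecreasing[of 0 1])
    fix t :: real assume t: "0 \<le> t" "t \<le> 1"
    have "(psi has_real_derivative dphi t / (phi t)\<^sup>2 - 1 / nu) (at t)"
      unfolding psi_def using phi_pos[OF t] nu_pos
      by (auto intro!: derivative_eq_intros deriv[OF t] simp: power2_eq_square field_simps)
    moreover have "dphi t / (phi t)\<^sup>2 - 1 / nu \<ge> 0"
      using riccati[OF t] phi_pos[OF t] nu_pos by (simp add: field_simps)
    ultimately show "\<exists>y. (psi has_real_derivative y) (at t) \<and> y \<ge> 0" by blast
  qed simp
  then have "- inverse (phi 0) \<le> - inverse (phi 1) - 1 / nu" by (simp add: psi_def)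
  moreover have "inverse (phi 1) > 0" using phi_pos[of 1] by simp
  ultimately have "1 / nu < inverse (phi 0)" by linarith
  then show False
    using phi0 nu_pos by (simp add: field_simps)
qed

lemma line_in_open_affine:
  fixes A :: "'a::real_normed_vector \<Rightarrow> 'b::real_vector"
  assumes "linear A" "open U" "x \<in> U" "A x = b" "A d = 0"
  obtains e where "e > 0" "\<And>t. \<bar>t\<bar> < e \<Longrightarrow> x + t *\<^sub>R d \<in> U \<and> A (x + t *\<^sub>R d) = b"
proof -
  have "open ((\<lambda>t. x + t *\<^sub>R d) -` U)"
    by (intro open_vimage assms continuous_intros)
  moreover have "0 \<in> (\<lambda>t. x + t *\<^sub>R d) -` U" using assms by simp
  ultimately obtain e where "e > 0" "ball 0 e \<subseteq> (\<lambda>t. x + t *\<^sub>R d) -` U"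
    by (meson openE)
  moreover have "A (x + t *\<^sub>R d) = b" for t
    using assms by (simp add: linear_add linear_scale)
  ultimately show ?thesis using that by (force simp: dist_norm)
qed

lemma orthogonal_kernel_imp_range_adjoint:
  fixes A :: "'a::euclidean_space \<Rightarrow> 'b::euclidean_space"
  assumes A: "linear A" and G: "\<And>d. A d = 0 \<Longrightarrow> G \<bullet> d = 0"
  shows "G \<in> range (adjoint A)"
proof -
  have range_subspace: "span (range (adjoint A)) = range (adjoint A)"
    by (simp add: adjoint_linear[OF A] linear_subspace_image span_eq_iff)
  obtain v w where v: "v \<in> span (range (adjoint A))"
    and w: "\<And>u. u \<in> span (range (adjoint A)) \<Longrightarrow> orthogonal w u" and G_eq: "G = v + w"
    using orthogonal_subspace_decomp_exists by blast
  have "A w \<bullet> y = 0" for y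
    using w[of "adjoint A y"] by (simp add: adjoint_works[OF A] orthogonal_def span_base)
  then have "A w = 0" by (metis inner_eq_zero_iff)
  then have "G \<bullet> w = 0" by (rule G)
  moreover have "v \<bullet> w = 0" using w[OF v] by (simp add: orthogonal_def inner_commute)
  ultimately have "w = 0" using G_eq by (simp add: inner_add_left)
  then show ?thesis using v range_subspace G_eq by auto
qed

lemma local_min_affine_gradient_in_range_adjoint:
  fixes A :: "'a::euclidean_space \<Rightarrow> 'b::euclidean_space"
  assumes A: "linear A" and U: "open U" "x \<in> U" and Ax: "A x = b"
    and min: "\<And>w. w \<in> U \<Longrightarrow> A w = b \<Longrightarrow> F x \<le> F w"
    and F_deriv: "(F has_derivative (\<lambda>v. G \<bullet> v)) (at x)"
  shows "G \<in> range (adjoint A)"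
proof (rule orthogonal_kernel_imp_range_adjoint[OF A])
  fix d assume "A d = 0"
  then obtain e where e: "e > 0" "\<And>t. \<bar>t\<bar> < e \<Longrightarrow> x + t *\<^sub>R d \<in> U \<and> A (x + t *\<^sub>R d) = b"
    using line_in_open_affine[OF A U Ax] by blast
  have "((\<lambda>t. F (x + t *\<^sub>R d)) has_real_derivative G \<bullet> d) (at 0)"
    using has_real_derivative_along_line[of F _ x 0 d] F_deriv by simp
  moreover have "\<forall>t. \<bar>0 - t\<bar> < e \<longrightarrow> F (x + 0 *\<^sub>R d) \<le> F (x + t *\<^sub>R d)"
    using min e(2) by simp
  ultimately show "G \<bullet> d = 0" using DERIV_local_min[OF _ e(1)] by blast
qed

lemma local_min_affine_hessian_nonneg:
  fixes A :: "'a::euclidean_space \<Rightarrow> 'b::euclidean_space"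
  assumes A: "linear A" and U: "open U" "x \<in> U" and Ax: "A x = b" and Ad: "A d = 0"
    and min: "\<And>w. w \<in> U \<Longrightarrow> A w = b \<Longrightarrow> F x \<le> F w"
    and F_deriv: "\<And>w. w \<in> U \<Longrightarrow> (F has_derivative (\<lambda>v. G w \<bullet> v)) (at w)"
    and G_deriv: "(G has_derivative G') (at x)"
  shows "G' d \<bullet> d \<ge> 0"
proof -
  obtain e where e: "e > 0" "\<And>t. \<bar>t\<bar> < e \<Longrightarrow> x + t *\<^sub>R d \<in> U \<and> A (x + t *\<^sub>R d) = b"
    using line_in_open_affine[OF A U Ax Ad] by blast
  have "((\<lambda>w. G w \<bullet> d) has_derivative (\<lambda>v. G' v \<bullet> d)) (at (x + 0 *\<^sub>R d))"
    using G_deriv by (auto intro: derivative_intros)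
  from has_real_derivative_along_line[OF this]
  have "((\<lambda>t. G (x + t *\<^sub>R d) \<bullet> d) has_real_derivative G' d \<bullet> d) (at 0)" .
  moreover have "((\<lambda>s. F (x + s *\<^sub>R d)) has_real_derivative G (x + t *\<^sub>R d) \<bullet> d) (at t)"
    if "\<bar>t\<bar> < e" for t
    using has_real_derivative_along_line F_deriv e(2)[OF that] by blast
  moreover have "F (x + 0 *\<^sub>R d) \<le> F (x + t *\<^sub>R d)" if "\<bar>t\<bar> < e" for t
    using min e(2)[OF that] by simp
  ultimately show ?thesis
    by (intro local_min_second_deriv_nonneg[OF e(1), of "\<lambda>t. F (x + t *\<^sub>R d)"])
qed

lemma affine_linear_level_set:
  assumes "linear A"
  shows "affine {x. A x = b}"
proof -
  have "A (u *\<^sub>R x + v *\<^sub>R y) = b" if "A x = b" "A y = b" "u + v = 1" for x y u v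
  proof -
    have "A (u *\<^sub>R x + v *\<^sub>R y) = u *\<^sub>R b + v *\<^sub>R b"
      using that by (simp add: linear_add[OF assms] linear_scale[OF assms])
    also have "\<dots> = b" using that(3) by (metis scaleR_add_left scaleR_one)
    finally show ?thesis .
  qed
  then show ?thesis unfolding affine_def by blast
qed

lemma closure_interior_Int_affine:
  fixes S L :: "'a::euclidean_space set"
  assumes S: "convex S" and L: "affine L" and meet: "interior S \<inter> L \<noteq> {}"
  shows "closure (interior S \<inter> L) = closure S \<inter> L"
proof -
  have "rel_interior (interior S) \<inter> rel_interior L \<noteq> {}"
    using meet by (simp add: rel_interior_affine[OF L] rel_interior_open)
  then have "closure (interior S \<inter> L) = closure (interior S) \<inter> closure L"
    by (intro closure_Int_convex convex_interior S affine_imp_convex L)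
  also have "\<dots> = closure S \<inter> L"
    using convex_closure_interior[OF S] meet affine_closed[OF L] by auto
  finally show ?thesis .
qed

lemma compact_barrier_sublevel:
  fixes C K :: "'a::metric_space set" and h :: "'a \<Rightarrow> real"
  assumes C: "compact C" and K: "open K" and h: "continuous_on K h"
    and blowup: "\<And>z. z \<in> C \<Longrightarrow> z \<notin> K \<Longrightarrow> filterlim h at_top (at z within K)"
  shows "compact {w \<in> C \<inter> K. h w \<le> M}"
proof -
  let ?T = "{w \<in> C \<inter> K. h w \<le> M}"
  have "closed ?T"
    unfolding closed_limpt
  proof (intro allI impI)
    fix w assume w: "w islimpt ?T"
    then have "w islimpt C" by (rule islimpt_subset) auto
    then have wC: "w \<in> C" using compact_imp_closed[OF C] by (simp add: closed_limpt)
    show "w \<in> ?T"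
    proof (rule ccontr)
      assume w_notin: "w \<notin> ?T"
      have "eventually (\<lambda>y. h y > M) (at w within K)"
      proof (cases "w \<in> K")
        case True
        then have "h w > M" using w_notin wC by auto
        moreover have "(h \<longlongrightarrow> h w) (at w within K)"
          using h True unfolding continuous_on_def by blast
        ultimately show ?thesis using order_tendstoD(1) by blast
      next
        case False
        then show ?thesis using blowup[OF wC] by (simp add: filterlim_at_top_dense)
      qed
      then obtain d where d: "d > 0" "\<And>y. y \<in> K \<Longrightarrow> y \<noteq> w \<Longrightarrow> dist y w < d \<Longrightarrow> h y > M"
        unfolding eventually_at by blast
      obtain y where "y \<in> ?T" "y \<noteq> w" "dist y w < d"
        using w d(1) unfolding islimpt_approachable by blast
      then show False using d(2)[of y] by auto
    qed
  qed
  moreover have "?T = C \<inter> ?T" by blast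
  ultimately show ?thesis using compact_Int_closed[OF C] by metis
qed

lemma barrier_penalty_attains_min:
  fixes C K :: "'a::metric_space set" and h phi :: "'a \<Rightarrow> real"
  assumes C: "compact C" and K: "open K" and h: "continuous_on K h"
    and blowup: "\<And>z. z \<in> C \<Longrightarrow> z \<notin> K \<Longrightarrow> filterlim h at_top (at z within K)"
    and phi: "continuous_on C phi" and mu: "mu > 0" and z: "z \<in> C \<inter> K"
  obtains x where "x \<in> C \<inter> K" "\<And>w. w \<in> C \<inter> K \<Longrightarrow> phi x + mu * h x \<le> phi w + mu * h w"
proof -
  define F where "F w = phi w + mu * h w" for w
  obtain m where m: "\<And>w. w \<in> C \<Longrightarrow> m \<le> phi w"
    using continuous_attains_inf[OF C _ phi] z by blast
  \<comment> \<open>Outside this sublevel set of \<open>h\<close>, \<open>F\<close> exceeds its value at \<open>z\<close>.\<close>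
  define T where "T = {w \<in> C \<inter> K. h w \<le> (F z - m) / mu}"
  have "z \<in> T"
    using m[of z] z mu by (auto simp: T_def F_def field_simps)
  moreover have "compact T"
    unfolding T_def by (rule compact_barrier_sublevel[OF C K h blowup])
  moreover have "continuous_on T F"
    unfolding F_def T_def
    by (intro continuous_intros continuous_on_subset[OF phi] continuous_on_subset[OF h]) auto
  ultimately obtain x where x: "x \<in> T" "\<And>w. w \<in> T \<Longrightarrow> F x \<le> F w"
    using continuous_attains_inf[of T F] by blast
  have "F x \<le> F w" if w: "w \<in> C \<inter> K" for w
  proof (cases "w \<in> T")
    case False
    then have "F z - m < mu * h w" using w mu by (auto simp: T_def field_simps)
    then have "F z < F w" using m[of w] w by (simp add: F_def)
    then show ?thesis using x \<open>z \<in> T\<close> by fastforce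
  qed (use x in blast)
  then show ?thesis using that x(1) by (auto simp: T_def F_def)
qed

lemma sc_barrier_has_derivative:
  assumes "sc_barrier Kb nu h g H" "x \<in> interior Kb"
  shows "(h has_derivative (\<lambda>u. g x \<bullet> u)) (at x)"
  using assms unfolding sc_barrier_def by blast

lemma sc_barrier_gradient_has_derivative:
  assumes "sc_barrier Kb nu h g H" "x \<in> interior Kb"
  shows "(g has_derivative H x) (at x)"
  using assms unfolding sc_barrier_def by blast

lemma sc_barrier_continuous_on:
  assumes "sc_barrier Kb nu h g H"
  shows "continuous_on (interior Kb) h"
  using sc_barrier_has_derivative[OF assms] has_derivative_continuous
  by (blast intro: continuous_at_imp_continuous_on)

lemma sc_barrier_boundary_blowup:
  assumes "sc_barrier Kb nu h g H" "z \<in> Kb" "z \<notin> interior Kb"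
  shows "filterlim h at_top (at z within interior Kb)"
  using assms unfolding sc_barrier_def by blast

lemma sc_barrier_hessian_linear:
  assumes "sc_barrier Kb nu h g H" "x \<in> interior Kb"
  shows "linear (H x)"
  using has_derivative_linear[OF sc_barrier_gradient_has_derivative[OF assms]] .

lemma sc_barrier_parameter_nonneg:
  assumes bar: "sc_barrier Kb nu h g H" and "interior Kb \<noteq> {}"
  shows "nu \<ge> 0"
proof -
  obtain x where x: "x \<in> interior Kb" using assms(2) by blast
  then have "2 * (g x \<bullet> 0) - H x 0 \<bullet> 0 \<le> nu"
    using bar unfolding sc_barrier_def by blast
  then show ?thesis using linear_0[OF sc_barrier_hessian_linear[OF bar x]] by simp
qed

lemma sc_barrier_gradient_square_le:
  assumes bar: "sc_barrier Kb nu h g H" and x: "x \<in> interior Kb"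
  shows "(g x \<bullet> u)\<^sup>2 \<le> nu * (H x u \<bullet> u)"
proof (cases "u = 0")
  case True
  then show ?thesis using linear_0[OF sc_barrier_hessian_linear[OF bar x]] by simp
next
  case False
  define a where "a = H x u \<bullet> u"
  have a: "a > 0" using bar x False unfolding sc_barrier_def a_def by blast
  \<comment> \<open>Optimise the defining inequality over the multiples \<open>lam *\<^sub>R u\<close> of \<open>u\<close>.\<close>
  define lam where "lam = (g x \<bullet> u) / a"
  have "2 * (g x \<bullet> (lam *\<^sub>R u)) - H x (lam *\<^sub>R u) \<bullet> (lam *\<^sub>R u) \<le> nu"
    using bar x unfolding sc_barrier_def by blast
  then have "2 * lam * (g x \<bullet> u) - lam * lam * a \<le> nu"
    using linear_scale[OF sc_barrier_hessian_linear[OF bar x]] by (simp add: a_def algebra_simps)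
  then have "(g x \<bullet> u)\<^sup>2 / a \<le> nu" using a by (simp add: lam_def power2_eq_square field_simps)
  then show ?thesis using a by (simp add: a_def field_simps)
qed

lemma sc_barrier_gradient_inner_le:
  fixes Kb :: "'a::euclidean_space set"
  assumes bar: "sc_barrier Kb nu h g H" and Kb: "convex Kb" "closed Kb"
    and x: "x \<in> interior Kb" and y: "y \<in> Kb"
  shows "g x \<bullet> (y - x) \<le> nu"
proof -
  have interior_bound: "g x \<bullet> (w - x) \<le> nu" if w: "w \<in> interior Kb" for w
  proof -
    define u where "u = w - x"
    have on_segment: "x + t *\<^sub>R u \<in> interior Kb" if "0 \<le> t" "t \<le> 1" for t
    proof -
      have "(1 - t) *\<^sub>R x + t *\<^sub>R w \<in> interior Kb"
        using convex_interior[OF Kb(1)] x w that unfolding convex_def by auto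
      then show ?thesis by (simp add: u_def algebra_simps)
    qed
    have "((\<lambda>t. g (x + t *\<^sub>R u) \<bullet> u) has_real_derivative H (x + t *\<^sub>R u) u \<bullet> u) (at t)"
      if "0 \<le> t" "t \<le> 1" for t
    proof -
      have "((\<lambda>z. g z \<bullet> u) has_derivative (\<lambda>v. H (x + t *\<^sub>R u) v \<bullet> u)) (at (x + t *\<^sub>R u))"
        using sc_barrier_gradient_has_derivative[OF bar on_segment[OF that]] by (auto intro: derivative_intros)
      from has_real_derivative_along_line[OF this] show ?thesis .
    qed
    moreover have "(g (x + t *\<^sub>R u) \<bullet> u)\<^sup>2 \<le> nu * (H (x + t *\<^sub>R u) u \<bullet> u)"
      if "0 \<le> t" "t \<le> 1" for t
      using sc_barrier_gradient_square_le[OF bar on_segment[OF that]] .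
    moreover have "nu \<ge> 0" using sc_barrier_parameter_nonneg[OF bar] x by blast
    ultimately have "g (x + 0 *\<^sub>R u) \<bullet> u \<le> nu"
      by (intro riccati_inequality_initial_bound[of nu "\<lambda>t. g (x + t *\<^sub>R u) \<bullet> u"])
    then show ?thesis by (simp add: u_def)
  qed
  have "y \<in> closure (interior Kb)"
    using convex_closure_interior[OF Kb(1)] x Kb(2) y by auto
  moreover have "closed {w. g x \<bullet> (w - x) \<le> nu}"
    by (intro closed_Collect_le continuous_intros)
  ultimately show ?thesis
    using closure_minimal[of "interior Kb" "{w. g x \<bullet> (w - x) \<le> nu}"] interior_bound by auto
qed

lemma sc_barrier_approx_normal_cone:
  fixes Kb :: "'a::euclidean_space set"
  assumes "sc_barrier Kb nu h g H" "convex Kb" "closed Kb" "x \<in> interior Kb"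
    and "mu \<ge> 0" "mu * nu \<le> eps"
  shows "mu *\<^sub>R g x \<in> approx_normal_cone eps Kb x"
proof -
  have "mu * (g x \<bullet> (y - x)) \<le> mu * nu" if "y \<in> Kb" for y
    using sc_barrier_gradient_inner_le[OF assms(1-4) that] assms(5) by (rule mult_left_mono)
  then show ?thesis using assms(6) unfolding approx_normal_cone_def by (auto intro: order_trans)
qed

locale barrier_local_min =
  fixes Kb :: "'a::euclidean_space set" and A :: "'a \<Rightarrow> 'b::euclidean_space" and b :: 'b
    and f :: "'a \<Rightarrow> real" and gf :: "'a \<Rightarrow> 'a"
    and nu :: real and h :: "'a \<Rightarrow> real" and gh :: "'a \<Rightarrow> 'a" and H :: "'a \<Rightarrow> 'a \<Rightarrow> 'a"
    and xstar :: 'a and r :: real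
  assumes Kb_closed: "closed Kb" and Kb_convex: "convex Kb" and A_linear: "linear A"
    and interior_feasible: "interior Kb \<inter> {x. A x = b} \<noteq> {}"
    and f_continuous: "continuous_on (Kb \<inter> {x. A x = b}) f"
    and f_derivative: "\<And>x. x \<in> interior Kb \<Longrightarrow> A x = b \<Longrightarrow> (f has_derivative (\<lambda>d. gf x \<bullet> d)) (at x)"
    and barrier: "sc_barrier Kb nu h gh H"
    and xstar_feasible: "xstar \<in> Kb" "A xstar = b"
    and r_pos: "r > 0"
    and xstar_min: "\<And>x. x \<in> Kb \<Longrightarrow> A x = b \<Longrightarrow> dist x xstar \<le> r \<Longrightarrow> f xstar \<le> f x"
begin

definition feasible_ball :: "'a set" where
  "feasible_ball = Kb \<inter> {x. A x = b} \<inter> cball xstar r"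

definition penalized :: "real \<Rightarrow> real \<Rightarrow> 'a \<Rightarrow> real" where
  "penalized mu eps x = f x + mu * h x + eps * (norm (x - xstar))\<^sup>2"

lemma compact_feasible_ball: "compact feasible_ball"
proof -
  have "closed {x. A x = b}"
    using affine_closed[OF affine_linear_level_set[OF A_linear]] .
  then show ?thesis
    unfolding feasible_ball_def using Kb_closed by (intro closed_Int_compact closed_Int compact_cball)
qed

lemma interior_feasible_approx:
  assumes "eta > 0"
  obtains z where "z \<in> interior Kb" "A z = b" "dist z xstar < eta" "\<bar>f z - f xstar\<bar> < eta"
proof -
  have xstar: "xstar \<in> Kb \<inter> {x. A x = b}" using xstar_feasible by simp
  obtain dl where dl: "dl > 0"
    "\<And>x. x \<in> Kb \<inter> {x. A x = b} \<Longrightarrow> dist x xstar < dl \<Longrightarrow> dist (f x) (f xstar) < eta"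
    using f_continuous[unfolded continuous_on_iff] xstar assms by blast
  have "xstar \<in> closure (interior Kb \<inter> {x. A x = b})"
    using closure_interior_Int_affine[OF Kb_convex affine_linear_level_set[OF A_linear] interior_feasible]
      Kb_closed xstar by simp
  moreover have "min eta dl > 0" using assms dl(1) by simp
  ultimately obtain z where z: "z \<in> interior Kb \<inter> {x. A x = b}" "dist z xstar < min eta dl"
    unfolding closure_approachable by blast
  then have "dist (f z) (f xstar) < eta"
    using dl(2)[of z] interior_subset by auto
  then show ?thesis using that z by (auto simp: dist_real_def)
qed

lemma penalized_has_derivative:
  assumes "x \<in> interior Kb" and "(f has_derivative (\<lambda>v. G \<bullet> v)) (at x)"
  shows "(penalized mu eps has_derivative
            (\<lambda>v. (G + mu *\<^sub>R gh x + (2 * eps) *\<^sub>R (x - xstar)) \<bullet> v)) (at x)"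
proof -
  have "(penalized mu eps has_derivative
          (\<lambda>v. G \<bullet> v + mu * (gh x \<bullet> v) + eps * ((x - xstar) \<bullet> v + v \<bullet> (x - xstar)))) (at x)"
    unfolding penalized_def power2_norm_eq_inner
    by (auto intro!: derivative_eq_intros assms(2) sc_barrier_has_derivative[OF barrier assms(1)])
  then show ?thesis
    by (simp add: inner_commute algebra_simps)
qed

lemma interior_feasible_ball_nonempty: "feasible_ball \<inter> interior Kb \<noteq> {}"
proof -
  obtain z where "z \<in> interior Kb" "A z = b" "dist z xstar < r"
    using interior_feasible_approx[OF r_pos] .
  then have "z \<in> feasible_ball \<inter> interior Kb"
    using interior_subset by (auto simp: feasible_ball_def dist_commute)
  then show ?thesis by blast
qed

lemma penalized_attains_min:
  assumes "mu > 0" "z \<in> feasible_ball \<inter> interior Kb"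
  obtains x where "x \<in> feasible_ball \<inter> interior Kb"
    "\<And>w. w \<in> feasible_ball \<inter> interior Kb \<Longrightarrow> penalized mu eps x \<le> penalized mu eps w"
proof -
  have "continuous_on feasible_ball (\<lambda>x. f x + eps * (norm (x - xstar))\<^sup>2)"
    by (intro continuous_intros continuous_on_subset[OF f_continuous]) (auto simp: feasible_ball_def)
  moreover have "filterlim h at_top (at z within interior Kb)"
    if "z \<in> feasible_ball" "z \<notin> interior Kb" for z
    using sc_barrier_boundary_blowup[OF barrier] that by (simp add: feasible_ball_def)
  ultimately obtain x where "x \<in> feasible_ball \<inter> interior Kb"
    "\<And>w. w \<in> feasible_ball \<inter> interior Kb \<Longrightarrow>
       f x + eps * (norm (x - xstar))\<^sup>2 + mu * h x \<le> f w + eps * (norm (w - xstar))\<^sup>2 + mu * h w"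
    using barrier_penalty_attains_min[OF compact_feasible_ball open_interior
        sc_barrier_continuous_on[OF barrier]] assms by blast
  then show ?thesis using that by (simp add: penalized_def algebra_simps)
qed

lemma barrier_bounded_below:
  obtains hlow where "\<And>w. w \<in> feasible_ball \<inter> interior Kb \<Longrightarrow> hlow \<le> h w"
proof -
  have blowup: "filterlim h at_top (at z within interior Kb)"
    if "z \<in> feasible_ball" "z \<notin> interior Kb" for z
    using sc_barrier_boundary_blowup[OF barrier] that by (simp add: feasible_ball_def)
  obtain z where z: "z \<in> feasible_ball \<inter> interior Kb"
    using interior_feasible_ball_nonempty by blast
  obtain x where "\<And>w. w \<in> feasible_ball \<inter> interior Kb \<Longrightarrow> 0 + 1 * h x \<le> 0 + 1 * h w"
    using barrier_penalty_attains_min[where phi = "\<lambda>_. 0" and mu = 1, OF compact_feasible_ball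
        open_interior sc_barrier_continuous_on[OF barrier] blowup continuous_on_const zero_less_one z]
    by blast
  then show ?thesis using that[of "h x"] by simp
qed

lemma penalized_min_close_to_xstar:
  assumes eps: "0 < eps" "eps \<le> 1"
    and x: "x \<in> feasible_ball" and x_le_z: "penalized mu eps x \<le> penalized mu eps z"
    and f_gap: "f z - f xstar \<le> eps\<^sup>2" and h_gap: "mu * (h z - h x) \<le> eps\<^sup>2"
    and z_dist: "norm (z - xstar) \<le> eps"
  shows "(norm (x - xstar))\<^sup>2 \<le> 3 * eps"
proof -
  have "eps * (norm (z - xstar))\<^sup>2 \<le> eps * eps\<^sup>2"
    using eps z_dist by (intro mult_left_mono power_mono) auto
  also have "\<dots> \<le> eps\<^sup>2" using eps by (simp add: mult_left_le_one_le)
  finally have "eps * (norm (z - xstar))\<^sup>2 \<le> eps\<^sup>2" .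
  moreover have "f xstar \<le> f x"
    using x xstar_min by (auto simp: feasible_ball_def dist_commute)
  moreover have "mu * h z - mu * h x \<le> eps\<^sup>2" using h_gap by (simp add: right_diff_distrib)
  ultimately have "eps * (norm (x - xstar))\<^sup>2 \<le> eps * (3 * eps)"
    using x_le_z f_gap unfolding penalized_def by (simp add: power2_eq_square)
  then show ?thesis using eps(1) by simp
qed

lemma penalized_minimizer:
  assumes eps: "0 < eps" "eps \<le> 1" "3 * eps < r\<^sup>2"
  obtains mu x where "0 < mu" "mu \<le> eps" "x \<in> interior Kb \<inter> ball xstar r" "A x = b"
    "(norm (x - xstar))\<^sup>2 \<le> 3 * eps"
    "\<And>w. w \<in> interior Kb \<inter> ball xstar r \<Longrightarrow> A w = b \<Longrightarrow> penalized mu eps x \<le> penalized mu eps w"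
proof -
  obtain hlow where hlow: "\<And>w. w \<in> feasible_ball \<inter> interior Kb \<Longrightarrow> hlow \<le> h w"
    using barrier_bounded_below by blast
  obtain z where z: "z \<in> interior Kb" "A z = b" "dist z xstar < min (eps\<^sup>2) r"
    "\<bar>f z - f xstar\<bar> < min (eps\<^sup>2) r"
    using interior_feasible_approx[of "min (eps\<^sup>2) r"] eps r_pos by auto
  have z_feasible: "z \<in> feasible_ball \<inter> interior Kb"
    using z interior_subset by (auto simp: feasible_ball_def dist_commute)
  \<comment> \<open>The weight \<open>mu\<close> is so small that the barrier term at \<open>z\<close> exceeds its minimum by at
    most \<open>eps\<^sup>2\<close>.\<close>
  define mu where "mu = min eps (eps\<^sup>2 / (h z - hlow + 1))"
  have h_gap: "h z - hlow \<ge> 0" using hlow[OF z_feasible] by simp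
  have mu: "0 < mu" "mu \<le> eps" using eps h_gap by (auto simp: mu_def)
  have mu_gap: "mu * (h z - hlow) \<le> eps\<^sup>2"
  proof -
    have "mu * (h z - hlow) \<le> eps\<^sup>2 / (h z - hlow + 1) * (h z - hlow)"
      using h_gap by (intro mult_right_mono) (auto simp: mu_def)
    also have "\<dots> \<le> eps\<^sup>2" using h_gap by (simp add: field_simps)
    finally show ?thesis .
  qed
  obtain x where x: "x \<in> feasible_ball \<inter> interior Kb"
    and x_min: "\<And>w. w \<in> feasible_ball \<inter> interior Kb \<Longrightarrow> penalized mu eps x \<le> penalized mu eps w"
    using penalized_attains_min[OF mu(1) z_feasible] by blast
  have "mu * (h z - h x) \<le> mu * (h z - hlow)"
    using hlow[OF x] mu(1) by (intro mult_left_mono) auto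
  moreover have "eps\<^sup>2 \<le> eps" using eps by (simp add: power2_eq_square mult_left_le_one_le)
  ultimately have x_dist: "(norm (x - xstar))\<^sup>2 \<le> 3 * eps"
    using penalized_min_close_to_xstar[OF eps(1,2)] x x_min[OF z_feasible] z(3,4) mu_gap
    by (auto simp: dist_norm abs_less_iff)
  then have "(norm (x - xstar))\<^sup>2 < r\<^sup>2" using eps(3) by linarith
  then have "norm (x - xstar) < r" using r_pos by (auto intro: power2_less_imp_less)
  then have x_U: "x \<in> interior Kb \<inter> ball xstar r"
    using x by (simp add: dist_norm norm_minus_commute)
  have "penalized mu eps x \<le> penalized mu eps w"
    if "w \<in> interior Kb \<inter> ball xstar r" "A w = b" for w
    using that interior_subset by (intro x_min) (auto simp: feasible_ball_def dist_commute)
  moreover have "A x = b" using x by (simp add: feasible_ball_def)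
  ultimately show ?thesis using that[OF mu x_U _ x_dist] by blast
qed

lemma approx_kkt_point:
  assumes eps: "0 < eps" "eps \<le> 1" "3 * eps < r\<^sup>2"
  obtains mu x y where "0 < mu" "mu \<le> eps" "x \<in> interior Kb" "A x = b"
    "(norm (x - xstar))\<^sup>2 \<le> 3 * eps"
    "adjoint A y = gf x + mu *\<^sub>R gh x + (2 * eps) *\<^sub>R (x - xstar)"
    "\<And>g2 Hf d. \<forall>z\<in>interior Kb. (f has_derivative (\<lambda>d. g2 z \<bullet> d)) (at z) \<and> (g2 has_derivative Hf z) (at z)
      \<Longrightarrow> A d = 0 \<Longrightarrow> (Hf x d + mu *\<^sub>R H x d + (2 * eps) *\<^sub>R d) \<bullet> d \<ge> 0"
proof -
  obtain mu x where mu: "0 < mu" "mu \<le> eps" and x_U: "x \<in> interior Kb \<inter> ball xstar r"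
    and Ax: "A x = b" and x_dist: "(norm (x - xstar))\<^sup>2 \<le> 3 * eps"
    and x_min: "\<And>w. w \<in> interior Kb \<inter> ball xstar r \<Longrightarrow> A w = b \<Longrightarrow>
      penalized mu eps x \<le> penalized mu eps w"
    using penalized_minimizer[OF eps] by metis
  have x: "x \<in> interior Kb" "A x = b" using x_U Ax by auto
  have U: "open (interior Kb \<inter> ball xstar r)" by (intro open_Int open_interior open_ball)
  have "gf x + mu *\<^sub>R gh x + (2 * eps) *\<^sub>R (x - xstar) \<in> range (adjoint A)"
    using penalized_has_derivative[OF x(1) f_derivative[OF x]]
    by (intro local_min_affine_gradient_in_range_adjoint[where F = "penalized mu eps",
          OF A_linear U x_U Ax x_min])
  then obtain y where y: "adjoint A y = gf x + mu *\<^sub>R gh x + (2 * eps) *\<^sub>R (x - xstar)"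
    by (metis rangeE)
  have second_order: "(Hf x d + mu *\<^sub>R H x d + (2 * eps) *\<^sub>R d) \<bullet> d \<ge> 0"
    if g2: "\<forall>z\<in>interior Kb. (f has_derivative (\<lambda>d. g2 z \<bullet> d)) (at z) \<and> (g2 has_derivative Hf z) (at z)"
      and d: "A d = 0" for g2 Hf d
  proof -
    define G where "G w = g2 w + mu *\<^sub>R gh w + (2 * eps) *\<^sub>R (w - xstar)" for w
    have "(G has_derivative (\<lambda>v. Hf x v + mu *\<^sub>R H x v + (2 * eps) *\<^sub>R v)) (at x)"
      unfolding G_def using g2 x(1) sc_barrier_gradient_has_derivative[OF barrier x(1)]
      by (auto intro!: derivative_eq_intros)
    moreover have "(penalized mu eps has_derivative (\<lambda>v. G w \<bullet> v)) (at w)"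
      if "w \<in> interior Kb \<inter> ball xstar r" for w
      using that g2 penalized_has_derivative by (simp add: G_def)
    ultimately show ?thesis
      using local_min_affine_hessian_nonneg[where F = "penalized mu eps", OF A_linear U x_U Ax d x_min]
      by blast
  qed
  show ?thesis using that[OF mu x x_dist y] second_order by blast
qed

lemma approx_kkt_sequence:
  obtains eps mu x y where "\<And>k. 0 < eps k" "eps \<longlonglongrightarrow> 0" "\<And>k. 0 < mu k" "mu \<longlonglongrightarrow> 0"
    "\<And>k. x k \<in> interior Kb" "\<And>k. A (x k) = b" "x \<longlonglongrightarrow> xstar"
    "\<And>k. adjoint A (y k) = gf (x k) + mu k *\<^sub>R gh (x k) + (2 * eps k) *\<^sub>R (x k - xstar)"
    "\<And>k g2 Hf d. \<forall>z\<in>interior Kb. (f has_derivative (\<lambda>d. g2 z \<bullet> d)) (at z) \<and> (g2 has_derivative Hf z) (at z)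
      \<Longrightarrow> A d = 0 \<Longrightarrow> (Hf (x k) d + mu k *\<^sub>R H (x k) d + (2 * eps k) *\<^sub>R d) \<bullet> d \<ge> 0"
proof -
  define c where "c = min 1 (r\<^sup>2 / 4)"
  define eps where "eps k = c / real (Suc k)" for k
  have c: "0 < c" "c \<le> 1" "c \<le> r\<^sup>2 / 4" using r_pos by (auto simp: c_def)
  have "3 * c < r\<^sup>2" using c by linarith
  have eps: "0 < eps k" "eps k \<le> 1" "3 * eps k < r\<^sup>2" for k
  proof -
    have "0 < eps k" "eps k \<le> c" using c(1) by (auto simp: eps_def field_simps)
    then show "0 < eps k" "eps k \<le> 1" "3 * eps k < r\<^sup>2" using c \<open>3 * c < r\<^sup>2\<close> by linarith+
  qed
  have eps_lim: "eps \<longlonglongrightarrow> 0"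
    unfolding eps_def using LIMSEQ_Suc[OF lim_const_over_n[of c]] by simp
  define kkt where "kkt k m z w \<longleftrightarrow> 0 < m \<and> m \<le> eps k \<and> z \<in> interior Kb \<and> A z = b \<and>
      (norm (z - xstar))\<^sup>2 \<le> 3 * eps k \<and>
      adjoint A w = gf z + m *\<^sub>R gh z + (2 * eps k) *\<^sub>R (z - xstar) \<and>
      (\<forall>g2 Hf d. (\<forall>z\<in>interior Kb. (f has_derivative (\<lambda>d. g2 z \<bullet> d)) (at z) \<and> (g2 has_derivative Hf z) (at z))
        \<longrightarrow> A d = 0 \<longrightarrow> (Hf z d + m *\<^sub>R H z d + (2 * eps k) *\<^sub>R d) \<bullet> d \<ge> 0)" for k m z w
  have "\<exists>m z w. kkt k m z w" for k
    using approx_kkt_point[OF eps[of k]] unfolding kkt_def by metis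
  then obtain mu x y where kkt: "\<And>k. kkt k (mu k) (x k) (y k)" by metis
  have mu: "0 < mu k" "mu k \<le> eps k" and x_dist: "(norm (x k - xstar))\<^sup>2 \<le> 3 * eps k" for k
    using kkt[of k] by (simp_all add: kkt_def)
  have mu_lim: "mu \<longlonglongrightarrow> 0"
    using mu by (intro tendsto_sandwich[OF _ _ tendsto_const eps_lim] always_eventually)
      (auto simp: less_imp_le)
  have x_lim: "x \<longlonglongrightarrow> xstar"
  proof -
    have "\<forall>k. norm (x k - xstar) \<le> sqrt (3 * eps k)"
      using x_dist by (simp add: real_le_rsqrt)
    moreover have "(\<lambda>k. sqrt (3 * eps k)) \<longlonglongrightarrow> 0"
      using tendsto_real_sqrt[OF tendsto_mult_right_zero[OF eps_lim, of 3]] by simp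
    ultimately have "(\<lambda>k. x k - xstar) \<longlonglongrightarrow> 0"
      by (rule Lim_null_comparison[OF always_eventually])
    then show ?thesis by (rule LIM_zero_cancel)
  qed
  show ?thesis
  proof (rule that[of eps mu x y])
    fix k g2 Hf d
    assume "\<forall>z\<in>interior Kb. (f has_derivative (\<lambda>d. g2 z \<bullet> d)) (at z) \<and> (g2 has_derivative Hf z) (at z)"
      and "A d = 0"
    then show "(Hf (x k) d + mu k *\<^sub>R H (x k) d + (2 * eps k) *\<^sub>R d) \<bullet> d \<ge> 0"
      using kkt[of k] unfolding kkt_def by blast
  qed (use eps eps_lim mu mu_lim x_lim kkt in \<open>simp_all add: kkt_def\<close>)
qed

end

theorem theorem2p1:
  fixes Kb :: "('a::euclidean_space) set"
    and A :: "'a \<Rightarrow> real ^ 'm" and b :: "real ^ 'm"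
    and f :: "'a \<Rightarrow> real" and gf :: "'a \<Rightarrow> 'a"
    and nu :: real and h :: "'a \<Rightarrow> real" and gh :: "'a \<Rightarrow> 'a" and H :: "'a \<Rightarrow> 'a \<Rightarrow> 'a"
    and xstar :: 'a
  assumes Kb_closed: "closed Kb" and Kb_convex: "convex Kb"
    and K_ne: "interior Kb \<noteq> {}"
    and A_lin: "linear A" and A_surj: "range A = UNIV"
    and X_ne: "interior Kb \<inter> {x. A x = b} \<noteq> {}"
    and f_cont: "continuous_on (Kb \<inter> {x. A x = b}) f"
    and f_diff: "\<forall>x\<in>interior Kb \<inter> {x. A x = b}. (f has_derivative (\<lambda>d. gf x \<bullet> d)) (at x)"
    and gf_cont: "continuous_on (interior Kb \<inter> {x. A x = b}) gf"
    and glob: "\<exists>z\<in>Kb \<inter> {x. A x = b}. \<forall>x\<in>Kb \<inter> {x. A x = b}. f z \<le> f x"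
    and barrier: "sc_barrier Kb nu h gh H"
    and xstar_feas: "xstar \<in> Kb" "A xstar = b"
    and xstar_loc: "\<exists>e>0. \<forall>x\<in>Kb \<inter> {x. A x = b}. dist x xstar < e \<longrightarrow> f xstar \<le> f x"
  shows "\<exists>(x :: nat \<Rightarrow> 'a) (y :: nat \<Rightarrow> real ^ 'm) (s :: nat \<Rightarrow> 'a) (sigma :: nat \<Rightarrow> real).
     (\<forall>k. sigma k > 0) \<and> sigma \<longlonglongrightarrow> 0 \<and>
     (\<forall>k. x k \<in> interior Kb \<and> A (x k) = b) \<and> x \<longlonglongrightarrow> xstar \<and>
     (\<lambda>k. gf (x k) - adjoint A (y k) - s k) \<longlonglongrightarrow> 0 \<and>
     (\<forall>k. - s k \<in> approx_normal_cone (sigma k) Kb (x k)) \<and>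
     (\<forall>(g2 :: 'a \<Rightarrow> 'a) (Hf :: 'a \<Rightarrow> 'a \<Rightarrow> 'a).
        (\<forall>z\<in>interior Kb. (f has_derivative (\<lambda>d. g2 z \<bullet> d)) (at z) \<and> (g2 has_derivative Hf z) (at z))
        \<longrightarrow> (\<exists>(theta :: nat \<Rightarrow> real) (delta :: nat \<Rightarrow> real).
              (\<forall>k. theta k > 0 \<and> delta k > 0) \<and> theta \<longlonglongrightarrow> 0 \<and> delta \<longlonglongrightarrow> 0 \<and>
              (\<forall>k d. A d = 0 \<longrightarrow>
                 (Hf (x k) d + theta k *\<^sub>R H (x k) d + delta k *\<^sub>R d) \<bullet> d \<ge> 0)))"
proof -
  obtain e where e: "e > 0" "\<forall>x\<in>Kb \<inter> {x. A x = b}. dist x xstar < e \<longrightarrow> f xstar \<le> f x"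
    using xstar_loc by blast
  interpret barrier_local_min Kb A b f gf nu h gh H xstar "e / 2"
    unfolding barrier_local_min_def
    using Kb_closed Kb_convex A_lin X_ne f_cont f_diff barrier xstar_feas e by auto
  obtain eps mu x y where eps: "\<And>k. 0 < eps k" "eps \<longlonglongrightarrow> 0" and mu: "\<And>k. 0 < mu k" "mu \<longlonglongrightarrow> 0"
    and x: "\<And>k. x k \<in> interior Kb" "\<And>k. A (x k) = b" "x \<longlonglongrightarrow> xstar"
    and y: "\<And>k. adjoint A (y k) = gf (x k) + mu k *\<^sub>R gh (x k) + (2 * eps k) *\<^sub>R (x k - xstar)"
    and second_order: "\<And>k g2 Hf d. \<forall>z\<in>interior Kb. (f has_derivative (\<lambda>d. g2 z \<bullet> d)) (at z) \<and>
        (g2 has_derivative Hf z) (at z) \<Longrightarrow> A d = 0 \<Longrightarrow>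
        (Hf (x k) d + mu k *\<^sub>R H (x k) d + (2 * eps k) *\<^sub>R d) \<bullet> d \<ge> 0"
    using approx_kkt_sequence by blast
  define s where "s k = - (mu k *\<^sub>R gh (x k))" for k
  define sigma where "sigma k = mu k * (nu + 1)" for k
  have nu: "nu \<ge> 0" using sc_barrier_parameter_nonneg[OF barrier K_ne] .
  have "gf (x k) - adjoint A (y k) - s k = - ((2 * eps k) *\<^sub>R (x k - xstar))" for k
    using y by (simp add: s_def)
  moreover have "(\<lambda>k. (2 * eps k) *\<^sub>R (x k - xstar)) \<longlonglongrightarrow> 0"
    using tendsto_scaleR[OF tendsto_mult_right_zero[OF eps(2)] LIM_zero[OF x(3)]] by simp
  ultimately have residual: "(\<lambda>k. gf (x k) - adjoint A (y k) - s k) \<longlonglongrightarrow> 0"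
    using tendsto_minus by fastforce
  have cone: "- s k \<in> approx_normal_cone (sigma k) Kb (x k)" for k
    using sc_barrier_approx_normal_cone[OF barrier Kb_convex Kb_closed x(1)[of k], of "mu k" "sigma k"]
      mu(1)[of k] nu by (simp add: s_def sigma_def)
  have sigma_lim: "sigma \<longlonglongrightarrow> 0"
    unfolding sigma_def[abs_def] by (rule tendsto_mult_left_zero[OF mu(2)])
  have sigma_pos: "sigma k > 0" for k
    using mu(1)[of k] nu by (simp add: sigma_def)
  have delta_lim: "(\<lambda>k. 2 * eps k) \<longlonglongrightarrow> 0" using tendsto_mult_right_zero[OF eps(2)] .
  show ?thesis
  proof (rule exI[of _ x], rule exI[of _ y], rule exI[of _ s], rule exI[of _ sigma], intro conjI allI impI)
    fix g2 Hf
    assume "\<forall>z\<in>interior Kb. (f has_derivative (\<lambda>d. g2 z \<bullet> d)) (at z) \<and> (g2 has_derivative Hf z) (at z)"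
    then show "\<exists>theta delta. (\<forall>k. theta k > 0 \<and> delta k > 0) \<and> theta \<longlonglongrightarrow> 0 \<and> delta \<longlonglongrightarrow> 0 \<and>
        (\<forall>k d. A d = 0 \<longrightarrow> (Hf (x k) d + theta k *\<^sub>R H (x k) d + delta k *\<^sub>R d) \<bullet> d \<ge> 0)"
      using second_order mu eps(1) delta_lim by (intro exI[of _ mu] exI[of _ "\<lambda>k. 2 * eps k"]) auto
  qed (use sigma_pos sigma_lim x residual cone in auto)
qed

end
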